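(* Let $f(x,y)=\frac12x^\top Px-b^\top x+x^\top Ay-\frac12y^\top Qy+c^\top y$ on $\mathbb{R}^n\times\mathbb{R}^m$ with $P\succeq0$, $Q\succeq0$, and suppose a stationary point of $f$ exists. For $\nu>0$ let $z^*(\nu)$ be the saddle point of $\min_x\max_y f_\nu(x,y)$, where $f_\nu(x,y)=f(x,y)+\frac{\nu}{2}\|x\|^2-\frac{\nu}{2}\|y\|^2$. Then there exist constants $C,\delta_0>0$ such that $\|z^*(\nu_1)-z^*(\nu_2)\|\le C|\nu_1-\nu_2|$ for all $0<\nu_1,\nu_2<\delta_0$ (i.e., the error bound condition holds with exponent $\theta=1$).
   Context: The error bound condition with exponent $\theta\in(0,1]$ means: there exist $C,\delta_0>0$ such that $\|z^*(\nu_1)-z^*(\nu_2)\|\le C|\nu_1-\nu_2|^\theta$ for all $0<\nu_1,\nu_2<\delta_0$. *)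

theory Defs
  imports "HOL-Analysis.Analysis"
begin

definition psd :: "real^'k^'k \<Rightarrow> bool" where
  "psd M \<longleftrightarrow> transpose M = M \<and> (\<forall>x. 0 \<le> x \<bullet> (M *v x))"

definition qsaddle ::
  "real^'n^'n \<Rightarrow> real^'n \<Rightarrow> real^'m^'n \<Rightarrow> real^'m^'m \<Rightarrow> real^'m
   \<Rightarrow> ((real^'n) \<times> (real^'m)) \<Rightarrow> real" where
  "qsaddle P b A Q c z =
     (let x = fst z; y = snd z in
      (1/2) * (x \<bullet> (P *v x)) - b \<bullet> x + x \<bullet> (A *v y)
      - (1/2) * (y \<bullet> (Q *v y)) + c \<bullet> y)"

definition regf ::
  "(((real^'n) \<times> (real^'m)) \<Rightarrow> real) \<Rightarrow> real \<Rightarrow> ((real^'n) \<times> (real^'m)) \<Rightarrow> real" where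
  "regf f \<nu> z = f z + (\<nu>/2) * (norm (fst z))\<^sup>2 - (\<nu>/2) * (norm (snd z))\<^sup>2"

definition stationary_point :: "('a::real_normed_vector \<Rightarrow> real) \<Rightarrow> 'a \<Rightarrow> bool" where
  "stationary_point g z \<longleftrightarrow> (g has_derivative (\<lambda>h. 0)) (at z)"

definition saddle_point :: "(('a \<times> 'b) \<Rightarrow> real) \<Rightarrow> ('a \<times> 'b) \<Rightarrow> bool" where
  "saddle_point g z \<longleftrightarrow>
     (\<forall>x y. g (fst z, y) \<le> g z \<and> g z \<le> g (x, snd z))"

end

theory Submission
  imports Defs
begin

text \<open>
  Put \<open>M (x, y) = (P x + A y, Q y - A\<^sup>T x)\<close>. This linear map is monotone,
  \<open>\<langle>M z, z\<rangle> = x\<^sup>T P x + y\<^sup>T Q y \<ge> 0\<close>, and the first-order conditions read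
  \<open>M z\<^sub>0 = (b, c)\<close> for a stationary point of \<open>f\<close> and \<open>M z + \<nu> z = (b, c)\<close>
  for a saddle point of \<open>f\<^sub>\<nu>\<close>. Monotonicity gives \<open>\<parallel>z(\<nu>)\<parallel> \<le> \<parallel>z\<^sub>0\<parallel>\<close>, and it
  makes the kernel of \<open>M\<close> orthogonal to its range, so \<open>M\<close> is bounded below
  by some \<open>e > 0\<close> on its range, which contains \<open>d = z(\<nu>\<^sub>1) - z(\<nu>\<^sub>2)\<close>. Hence
  \<open>e \<parallel>d\<parallel> \<le> \<parallel>M d\<parallel> \<le> \<parallel>M d + \<nu>\<^sub>1 d\<parallel> = |\<nu>\<^sub>1 - \<nu>\<^sub>2| \<parallel>z(\<nu>\<^sub>2)\<parallel> \<le> |\<nu>\<^sub>1 - \<nu>\<^sub>2| \<parallel>z\<^sub>0\<parallel>\<close>.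
\<close>

lemma quadratic_nonneg_imp_linear_coeff_eq_0:
  fixes L K :: real
  assumes nonneg: "\<And>t. 0 \<le> t * L + t\<^sup>2 * K"
  shows "L = 0"
proof -
  define s where "s = \<bar>K\<bar> + 1"
  have "s > 0" "s - K > 0" unfolding s_def by linarith+
  have "(- L / s) * L + (- L / s)\<^sup>2 * K = - L\<^sup>2 * (s - K) / s\<^sup>2"
    using \<open>s > 0\<close> by (simp add: field_simps power2_eq_square)
  then have "L\<^sup>2 * (s - K) \<le> 0"
    using nonneg[of "- L / s"] \<open>s > 0\<close> by (simp add: divide_le_0_iff)
  with \<open>s - K > 0\<close> show ?thesis
    by (simp add: mult_le_0_iff)
qed

lemma stationary_imp_linear_coeff_eq_0:
  fixes g :: "'a::real_normed_vector \<Rightarrow> real"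
  assumes "(g has_derivative (\<lambda>_. 0)) (at z)"
    and "\<And>t. g (z + t *\<^sub>R h) = g z + t * L + t\<^sup>2 * K"
  shows "L = 0"
proof -
  have "((\<lambda>t::real. z + t *\<^sub>R h) has_derivative (\<lambda>t. t *\<^sub>R h)) (at 0)"
    by (auto intro!: derivative_eq_intros)
  from has_derivative_compose[OF this] assms(1)
  have "((\<lambda>t. g (z + t *\<^sub>R h)) has_derivative (\<lambda>_. 0)) (at 0)"
    by (simp add: o_def)
  then have "((\<lambda>t. g z + t * L + t\<^sup>2 * K) has_derivative (\<lambda>_. 0)) (at 0)"
    using assms(2) by simp
  moreover have "((\<lambda>t. g z + t * L + t\<^sup>2 * K) has_derivative (\<lambda>t. t * L)) (at 0)"
    by (auto intro!: derivative_eq_intros)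
  ultimately have "(\<lambda>_. 0) = (\<lambda>t::real. t * L)"
    by (rule has_derivative_unique)
  then show ?thesis by (metis mult_1)
qed

lemma monotone_linear_kernel_orthogonal_range:
  fixes M :: "'a::real_inner \<Rightarrow> 'a"
  assumes "linear M" and mono: "\<And>w. 0 \<le> M w \<bullet> w" and "M w = 0"
  shows "w \<bullet> M v = 0"
proof (rule quadratic_nonneg_imp_linear_coeff_eq_0)
  fix t :: real
  have "M (w + t *\<^sub>R v) \<bullet> (w + t *\<^sub>R v) = t * (w \<bullet> M v) + t\<^sup>2 * (M v \<bullet> v)"
    using \<open>M w = 0\<close>
    by (simp add: linear_add[OF \<open>linear M\<close>] linear_scale[OF \<open>linear M\<close>] inner_add_right
        inner_commute power2_eq_square)
  then show "0 \<le> t * (w \<bullet> M v) + t\<^sup>2 * (M v \<bullet> v)"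
    using mono[of "w + t *\<^sub>R v"] by simp
qed

lemma monotone_linear_bounded_below_on_range:
  fixes M :: "'a::euclidean_space \<Rightarrow> 'a"
  assumes "linear M" and "\<And>w. 0 \<le> M w \<bullet> w"
  obtains e where "e > 0" and "\<And>w. w \<in> range M \<Longrightarrow> e * norm w \<le> norm (M w)"
proof -
  have "subspace (range M)"
    by (rule linear_subspace_image[OF \<open>linear M\<close> subspace_UNIV])
  moreover have "w = 0" if "w \<in> range M" and "M w = 0" for w
  proof -
    obtain v where "w = M v" using \<open>w \<in> range M\<close> by blast
    then have "w \<bullet> w = 0"
      using monotone_linear_kernel_orthogonal_range[OF assms \<open>M w = 0\<close>] by simp
    then show ?thesis by simp
  qed
  ultimately obtain e where "e > 0" "\<forall>w\<in>range M. e * norm w \<le> norm (M w)"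
    using injective_imp_isometric[OF closed_subspace] \<open>linear M\<close> linear_conv_bounded_linear
    by metis
  then show ?thesis using that by blast
qed

lemma monotone_regularized_solution_norm_le:
  fixes M :: "'a::real_inner \<Rightarrow> 'a"
  assumes "linear M" and mono: "\<And>w. 0 \<le> M w \<bullet> w"
    and "M z0 = u" and "M z + \<nu> *\<^sub>R z = u" and "0 < \<nu>"
  shows "norm z \<le> norm z0"
proof -
  have "M (z0 - z) = \<nu> *\<^sub>R z"
    using assms(3,4) by (simp add: linear_diff[OF \<open>linear M\<close>] algebra_simps)
  then have "0 \<le> \<nu> * (z \<bullet> (z0 - z))"
    using mono[of "z0 - z"] by simp
  then have "z \<bullet> z \<le> z \<bullet> z0"
    using \<open>0 < \<nu>\<close> by (simp add: zero_le_mult_iff inner_diff_right)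
  also have "\<dots> \<le> norm z * norm z0"
    by (rule norm_cauchy_schwarz)
  finally have "norm z * norm z \<le> norm z * norm z0"
    by (simp add: power2_norm_eq_inner[symmetric] power2_eq_square)
  then show ?thesis
    by (cases "z = 0") auto
qed

lemma monotone_norm_le_norm_add_scaleR:
  fixes M :: "'a::real_inner \<Rightarrow> 'a"
  assumes "0 \<le> M d \<bullet> d" and "0 \<le> \<nu>"
  shows "norm (M d) \<le> norm (M d + \<nu> *\<^sub>R d)"
proof (rule power2_le_imp_le)
  have "(norm (M d + \<nu> *\<^sub>R d))\<^sup>2 = (norm (M d))\<^sup>2 + 2 * \<nu> * (M d \<bullet> d) + \<nu>\<^sup>2 * (d \<bullet> d)"
    unfolding power2_norm_eq_inner
    by (simp add: inner_add_left inner_add_right inner_commute algebra_simps power2_eq_square)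
  then show "(norm (M d))\<^sup>2 \<le> (norm (M d + \<nu> *\<^sub>R d))\<^sup>2"
    using assms by simp
qed simp

lemma monotone_regularized_solutions_lipschitz:
  fixes M :: "'a::euclidean_space \<Rightarrow> 'a"
  assumes "linear M" and mono: "\<And>w. 0 \<le> M w \<bullet> w" and "u \<in> range M"
  obtains C where "C > 0"
    and "\<And>\<nu>1 \<nu>2 z1 z2. 0 < \<nu>1 \<Longrightarrow> 0 < \<nu>2 \<Longrightarrow> M z1 + \<nu>1 *\<^sub>R z1 = u \<Longrightarrow>
           M z2 + \<nu>2 *\<^sub>R z2 = u \<Longrightarrow> norm (z1 - z2) \<le> C * \<bar>\<nu>1 - \<nu>2\<bar>"
proof -
  obtain z0 where "M z0 = u" using \<open>u \<in> range M\<close> by blast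
  obtain e where "e > 0" and e: "\<And>w. w \<in> range M \<Longrightarrow> e * norm w \<le> norm (M w)"
    using monotone_linear_bounded_below_on_range[OF \<open>linear M\<close> mono] by blast
  have bound: "norm (z1 - z2) \<le> (norm z0 + 1) / e * \<bar>\<nu>1 - \<nu>2\<bar>"
    if "0 < \<nu>1" "0 < \<nu>2" and z1: "M z1 + \<nu>1 *\<^sub>R z1 = u" and z2: "M z2 + \<nu>2 *\<^sub>R z2 = u"
    for \<nu>1 \<nu>2 z1 z2
  proof -
    have "z = M ((1 / \<nu>) *\<^sub>R (z0 - z))" if "0 < \<nu>" "M z + \<nu> *\<^sub>R z = u" for z \<nu>
    proof -
      have "M (z0 - z) = \<nu> *\<^sub>R z"
        using that(2) \<open>M z0 = u\<close> by (simp add: linear_diff[OF \<open>linear M\<close>] algebra_simps)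
      then show ?thesis
        using \<open>0 < \<nu>\<close> by (simp add: linear_scale[OF \<open>linear M\<close>])
    qed
    then have "z1 - z2 \<in> range M"
      using that by (metis linear_diff[OF \<open>linear M\<close>] rangeI)
    then have "e * norm (z1 - z2) \<le> norm (M (z1 - z2))"
      by (rule e)
    also have "\<dots> \<le> norm (M (z1 - z2) + \<nu>1 *\<^sub>R (z1 - z2))"
      using mono \<open>0 < \<nu>1\<close> by (simp add: monotone_norm_le_norm_add_scaleR)
    also have "M (z1 - z2) + \<nu>1 *\<^sub>R (z1 - z2) = (\<nu>2 - \<nu>1) *\<^sub>R z2"
      using z1 z2 by (simp add: linear_diff[OF \<open>linear M\<close>] algebra_simps)
    also have "norm \<dots> \<le> \<bar>\<nu>1 - \<nu>2\<bar> * norm z0"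
      using monotone_regularized_solution_norm_le[OF \<open>linear M\<close> mono \<open>M z0 = u\<close> z2 \<open>0 < \<nu>2\<close>]
      by (simp add: abs_minus_commute mult_left_mono)
    also have "\<dots> \<le> \<bar>\<nu>1 - \<nu>2\<bar> * (norm z0 + 1)"
      by (simp add: distrib_left)
    finally show ?thesis
      using \<open>e > 0\<close> by (simp add: field_simps)
  qed
  show ?thesis
    by (rule that[OF _ bound]) (use \<open>e > 0\<close> in \<open>auto intro!: divide_pos_pos add_nonneg_pos\<close>)
qed

lemma inner_transpose_matrix_vector:
  fixes A :: "real^'m^'n"
  shows "y \<bullet> (transpose A *v x) = x \<bullet> (A *v y)"
  by (metis transpose_matrix_vector dot_lmul_matrix inner_commute)

lemma psd_inner_commute: "psd P \<Longrightarrow> x \<bullet> (P *v y) = y \<bullet> (P *v x)"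
  unfolding psd_def by (metis inner_transpose_matrix_vector)

text \<open>The gradient field \<open>(\<nabla>\<^sub>x f, -\<nabla>\<^sub>y f)\<close> of \<^const>\<open>qsaddle\<close> is
  \<open>z \<mapsto> saddle_operator P A Q z - (b, c)\<close>.\<close>

definition saddle_operator ::
  "real^'n^'n \<Rightarrow> real^'m^'n \<Rightarrow> real^'m^'m
   \<Rightarrow> (real^'n) \<times> (real^'m) \<Rightarrow> (real^'n) \<times> (real^'m)" where
  "saddle_operator P A Q z = (P *v fst z + A *v snd z, Q *v snd z - transpose A *v fst z)"

lemma linear_saddle_operator: "linear (saddle_operator P A Q)"
  by (rule linearI)
    (auto simp: saddle_operator_def matrix_vector_right_distrib matrix_vector_mult_scaleR
      algebra_simps simp del: transpose_matrix_vector)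

lemma inner_saddle_operator_self:
  "z \<bullet> saddle_operator P A Q z = fst z \<bullet> (P *v fst z) + snd z \<bullet> (Q *v snd z)"
proof (cases z)
  case (Pair x y)
  then show ?thesis
    using inner_transpose_matrix_vector[of y A x]
    by (simp add: saddle_operator_def inner_add_right inner_diff_right
        del: transpose_matrix_vector)
qed

lemma saddle_operator_monotone:
  "psd P \<Longrightarrow> psd Q \<Longrightarrow> 0 \<le> saddle_operator P A Q z \<bullet> z"
  unfolding inner_commute[of "saddle_operator P A Q z"] inner_saddle_operator_self psd_def
  by simp

lemma regf_qsaddle_along_line:
  fixes P :: "real^'n^'n" and A :: "real^'m^'n" and Q :: "real^'m^'m"
    and b c \<nu> z
  assumes "psd P" and "psd Q"
  defines "F \<equiv> saddle_operator P A Q z + \<nu> *\<^sub>R z - (b, c)"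
  shows "\<exists>K. \<forall>t. regf (qsaddle P b A Q c) \<nu> (z + t *\<^sub>R h) = regf (qsaddle P b A Q c) \<nu> z
    + t * (fst h \<bullet> fst F - snd h \<bullet> snd F) + t\<^sup>2 * K"
proof (intro exI allI)
  fix t
  show "regf (qsaddle P b A Q c) \<nu> (z + t *\<^sub>R h) = regf (qsaddle P b A Q c) \<nu> z
    + t * (fst h \<bullet> fst F - snd h \<bullet> snd F)
    + t\<^sup>2 * ((fst h \<bullet> (P *v fst h) - snd h \<bullet> (Q *v snd h)
              + \<nu> * ((norm (fst h))\<^sup>2 - (norm (snd h))\<^sup>2)) / 2 + fst h \<bullet> (A *v snd h))"
    using psd_inner_commute[OF assms(1), of "fst z" "fst h"]
      psd_inner_commute[OF assms(2), of "snd z" "snd h"]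
      inner_transpose_matrix_vector[of "snd h" A "fst z"]
    unfolding F_def regf_def qsaddle_def Let_def saddle_operator_def power2_norm_eq_inner
    by (simp add: matrix_vector_right_distrib matrix_vector_mult_scaleR inner_add_left
        inner_add_right inner_diff_left inner_diff_right inner_commute algebra_simps
        power2_eq_square add_divide_distrib diff_divide_distrib del: transpose_matrix_vector)
qed

lemma saddle_point_regf_qsaddle_imp_eq:
  fixes P :: "real^'n^'n" and A :: "real^'m^'n" and Q :: "real^'m^'m"
  assumes "psd P" and "psd Q" and "saddle_point (regf (qsaddle P b A Q c) \<nu>) z"
  shows "saddle_operator P A Q z + \<nu> *\<^sub>R z = (b, c)"
proof -
  let ?g = "regf (qsaddle P b A Q c) \<nu>"
  define F where "F = saddle_operator P A Q z + \<nu> *\<^sub>R z - (b, c)"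
  have "z + t *\<^sub>R (fst F, 0) = (fst z + t *\<^sub>R fst F, snd z)"
    and "z + t *\<^sub>R (0, snd F) = (fst z, snd z + t *\<^sub>R snd F)" for t
    by (simp_all add: prod_eq_iff)
  then have min_x: "?g z \<le> ?g (z + t *\<^sub>R (fst F, 0))"
    and max_y: "?g (z + t *\<^sub>R (0, snd F)) \<le> ?g z" for t
    using assms(3) unfolding saddle_point_def by simp_all
  obtain K where K: "\<And>t. ?g (z + t *\<^sub>R (fst F, 0)) = ?g z + t * (fst F \<bullet> fst F) + t\<^sup>2 * K"
    using regf_qsaddle_along_line[OF assms(1,2), where A = A and b = b and c = c and z = z
        and \<nu> = \<nu> and h = "(fst F, 0)"]
    unfolding F_def by auto
  have "fst F \<bullet> fst F = 0"
  proof (rule quadratic_nonneg_imp_linear_coeff_eq_0)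
    show "0 \<le> t * (fst F \<bullet> fst F) + t\<^sup>2 * K" for t
      using min_x[of t] K[of t] by linarith
  qed
  obtain K' where K': "\<And>t. ?g (z + t *\<^sub>R (0, snd F)) = ?g z - t * (snd F \<bullet> snd F) + t\<^sup>2 * K'"
    using regf_qsaddle_along_line[OF assms(1,2), where A = A and b = b and c = c and z = z
        and \<nu> = \<nu> and h = "(0, snd F)"]
    unfolding F_def by auto
  have "snd F \<bullet> snd F = 0"
  proof (rule quadratic_nonneg_imp_linear_coeff_eq_0)
    show "0 \<le> t * (snd F \<bullet> snd F) + t\<^sup>2 * - K'" for t
      using max_y[of t] K'[of t] by simp
  qed
  with \<open>fst F \<bullet> fst F = 0\<close> have "F = 0"
    by (simp add: prod_eq_iff)
  then show ?thesis
    by (simp add: F_def)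
qed

lemma stationary_point_qsaddle_imp_eq:
  fixes P :: "real^'n^'n" and A :: "real^'m^'n" and Q :: "real^'m^'m"
  assumes "psd P" and "psd Q" and "stationary_point (qsaddle P b A Q c) z"
  shows "saddle_operator P A Q z = (b, c)"
proof -
  define F where "F = saddle_operator P A Q z - (b, c)"
  have regf_0: "regf (qsaddle P b A Q c) 0 = qsaddle P b A Q c"
    by (simp add: regf_def fun_eq_iff)
  have F_eq: "saddle_operator P A Q z + 0 *\<^sub>R z - (b, c) = F"
    by (simp add: F_def)
  obtain K where "\<And>t. qsaddle P b A Q c (z + t *\<^sub>R (fst F, - snd F))
      = qsaddle P b A Q c z + t * (F \<bullet> F) + t\<^sup>2 * K"
    using regf_qsaddle_along_line[OF assms(1,2), where A = A and b = b and c = c and z = z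
        and \<nu> = 0 and h = "(fst F, - snd F)"]
    unfolding regf_0 F_eq by (auto simp: inner_prod_def)
  with assms(3) have "F \<bullet> F = 0"
    unfolding stationary_point_def by (rule stationary_imp_linear_coeff_eq_0)
  then show ?thesis
    by (simp add: F_def)
qed

theorem proposition5p3:
  fixes P :: "real^'n^'n" and b :: "real^'n" and A :: "real^'m^'n"
    and Q :: "real^'m^'m" and c :: "real^'m"
  assumes "psd P" and "psd Q"
    and "\<exists>z. stationary_point (qsaddle P b A Q c) z"
  shows "\<exists>C \<delta>0. C > 0 \<and> \<delta>0 > 0 \<and>
    (\<forall>\<nu>1 \<nu>2 z1 z2. 0 < \<nu>1 \<and> \<nu>1 < \<delta>0 \<and> 0 < \<nu>2 \<and> \<nu>2 < \<delta>0
       \<and> saddle_point (regf (qsaddle P b A Q c) \<nu>1) z1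
       \<and> saddle_point (regf (qsaddle P b A Q c) \<nu>2) z2
       \<longrightarrow> norm (z1 - z2) \<le> C * \<bar>\<nu>1 - \<nu>2\<bar>)"
proof -
  let ?M = "saddle_operator P A Q"
  have "(b, c) \<in> range ?M"
    using assms(3) stationary_point_qsaddle_imp_eq[OF assms(1,2)] by (metis rangeI)
  then obtain C where "C > 0" and lipschitz:
    "\<And>\<nu>1 \<nu>2 z1 z2. 0 < \<nu>1 \<Longrightarrow> 0 < \<nu>2 \<Longrightarrow> ?M z1 + \<nu>1 *\<^sub>R z1 = (b, c) \<Longrightarrow>
       ?M z2 + \<nu>2 *\<^sub>R z2 = (b, c) \<Longrightarrow> norm (z1 - z2) \<le> C * \<bar>\<nu>1 - \<nu>2\<bar>"
    using monotone_regularized_solutions_lipschitz[OF linear_saddle_operator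
        saddle_operator_monotone[OF assms(1,2)]] by blast
  show ?thesis
    using \<open>C > 0\<close> lipschitz saddle_point_regf_qsaddle_imp_eq[OF assms(1,2)]
    by (intro exI[of _ C] exI[of _ 1]) blast
qed

end
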